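(* Let $p>q>1$ be relatively prime integers. A sequence $\mathbf{x}=x_0x_1\cdots$ over a finite alphabet $A$ is $\frac pq$-automatic if and only if, for every $a\in A$, there exists a $\frac pq$-recognizable set $R_a$ such that $\{i\in\mathbb{N}: x_i=a\}=R_a\cap\mathbb{N}$.
   Context: $A_p=\{0,\ldots,p-1\}$; for $w=w_\ell\cdots w_0\in A_p^*$, $\mathrm{val}_{\frac pq}(w)=\sum_{i=0}^{\ell}\frac{w_i}{q}(\frac pq)^i$ (a rational number); $\mathrm{rep}_{\frac pq}(n)$ is the unique word not starting with $0$ of value $n$ ($\mathrm{rep}_{\frac pq}(0)=\varepsilon$). $\mathbf{x}$ is $\frac pq$-automatic if there is a deterministic finite automaton with output $(Q,q_0,A_p,\delta,\tau:Q\to A)$ with $x_n=\tau(\delta(q_0,\mathrm{rep}_{\frac pq}(n)))$ for all $n$. Let $N_{\frac pq}=\mathrm{val}_{\frac pq}(A_p^* )$. A subset $X\subseteq N_{\frac pq}$ is $\frac pq$-recognizable if there is a deterministic finite automaton over $A_p$ accepting a language $L$ with $\mathrm{val}_{\frac pq}(L)=X$. *)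

theory Defs
  imports Main "HOL.Rat"
begin

text \<open>Words over A_p are lists of naturals < p, written most significant digit first:
  the list [w_l, ..., w_0] represents w = w_l ... w_0.\<close>

definition alph :: "nat \<Rightarrow> nat set" where
  "alph p = {0..<p}"

definition val_pq :: "nat \<Rightarrow> nat \<Rightarrow> nat list \<Rightarrow> rat" where
  "val_pq p q w = (\<Sum>i<length w. (of_nat (rev w ! i) / of_nat q) * (of_nat p / of_nat q) ^ i)"

definition rep_pq :: "nat \<Rightarrow> nat \<Rightarrow> nat \<Rightarrow> nat list" where
  "rep_pq p q n = (THE w. set w \<subseteq> alph p \<and> (w = [] \<or> hd w \<noteq> 0) \<and> val_pq p q w = of_nat n)"

definition N_pq :: "nat \<Rightarrow> nat \<Rightarrow> rat set" where
  "N_pq p q = val_pq p q ` lists (alph p)"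

definition pq_automatic :: "nat \<Rightarrow> nat \<Rightarrow> 'a set \<Rightarrow> (nat \<Rightarrow> 'a) \<Rightarrow> bool" where
  "pq_automatic p q A x \<longleftrightarrow>
     (\<exists>(Q::nat set) q0 (\<delta>::nat \<Rightarrow> nat \<Rightarrow> nat) (\<tau>::nat \<Rightarrow> 'a).
        finite Q \<and> q0 \<in> Q \<and> (\<forall>s\<in>Q. \<forall>d\<in>alph p. \<delta> s d \<in> Q) \<and> (\<forall>s\<in>Q. \<tau> s \<in> A) \<and>
        (\<forall>n. x n = \<tau> (foldl \<delta> q0 (rep_pq p q n))))"

definition dfa_lang :: "nat \<Rightarrow> nat \<Rightarrow> (nat \<Rightarrow> nat \<Rightarrow> nat) \<Rightarrow> nat set \<Rightarrow> nat list set" where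
  "dfa_lang p q0 \<delta> F = {w \<in> lists (alph p). foldl \<delta> q0 w \<in> F}"

definition pq_recognizable :: "nat \<Rightarrow> nat \<Rightarrow> rat set \<Rightarrow> bool" where
  "pq_recognizable p q X \<longleftrightarrow> X \<subseteq> N_pq p q \<and>
     (\<exists>(Q::nat set) q0 (\<delta>::nat \<Rightarrow> nat \<Rightarrow> nat) F.
        finite Q \<and> q0 \<in> Q \<and> (\<forall>s\<in>Q. \<forall>d\<in>alph p. \<delta> s d \<in> Q) \<and> F \<subseteq> Q \<and>
        val_pq p q ` dfa_lang p q0 \<delta> F = X)"

end

theory Submission
  imports Defs "HOL-Library.FuncSet"
begin

text \<open>Since \<open>q\<close> is prime to \<open>p\<close>, every word of natural value \<open>n\<close> is \<open>rep_pq p q n\<close> padded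
  with leading zeros. So a DFA reading representations yields a recognizable set once it is
  made to skip leading zeros, and conversely the subset construction over all zero-paddings
  turns a DFA for a recognizable set into one reading representations. A sequence over a finite
  alphabet is automatic iff each fibre \<open>{n. x n = a}\<close> is, by the product construction.\<close>

lemma val_pq_Nil [simp]: "val_pq p q [] = 0"
  by (simp add: val_pq_def)

lemma val_pq_snoc:
  "val_pq p q (w @ [d]) = of_nat p / of_nat q * val_pq p q w + of_nat d / of_nat q"
proof -
  have "val_pq p q (w @ [d])
      = of_nat d / of_nat q + (\<Sum>i<length w. of_nat (rev w ! i) / of_nat q * (of_nat p / of_nat q) ^ Suc i)"
    unfolding val_pq_def by (simp add: sum.lessThan_Suc_shift del: sum.lessThan_Suc)
  then show ?thesis
    by (simp add: val_pq_def sum_distrib_left mult_ac)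
qed

lemma val_pq_Cons:
  "val_pq p q (d # w) = of_nat d / of_nat q * (of_nat p / of_nat q) ^ length w + val_pq p q w"
  unfolding val_pq_def by (simp add: nth_append)

lemma val_pq_replicate_0_append [simp]: "val_pq p q (replicate k 0 @ w) = val_pq p q w"
  by (induction k) (simp_all add: val_pq_Cons)

lemma val_pq_nonneg: "val_pq p q w \<ge> 0"
  unfolding val_pq_def by (simp add: sum_nonneg)

lemma val_pq_pos:
  assumes "0 < p" "0 < q" "w \<noteq> []" "hd w \<noteq> 0"
  shows "val_pq p q w > 0"
proof -
  obtain d u where "w = d # u" and "d \<noteq> 0"
    using assms(3,4) by (cases w) auto
  then show ?thesis
    using assms(1,2) val_pq_nonneg[of p q u] by (simp add: val_pq_Cons add_pos_nonneg)
qed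

lemma val_pq_mult_q_power_nat:
  assumes "0 < q"
  shows "\<exists>m. val_pq p q w * of_nat q ^ length w = of_nat m"
proof (induction w rule: rev_induct)
  case (snoc d w)
  then obtain m where "val_pq p q w * of_nat q ^ length w = of_nat m" by blast
  then have "val_pq p q (w @ [d]) * of_nat q ^ length (w @ [d]) = of_nat (p * m + d * q ^ length w)"
    using assms by (simp add: val_pq_snoc field_simps)
  then show ?case by blast
qed simp

text \<open>Since \<open>q\<close> is prime to \<open>p\<close>, the denominator \<open>q ^ length w\<close> of \<open>val_pq p q w\<close>
  cannot cancel against \<open>p\<close>; so integrality propagates from a word to its prefixes.\<close>
lemma val_pq_snoc_eq_nat:
  assumes "coprime p q" "0 < q" "val_pq p q (w @ [d]) = of_nat N"
  shows "\<exists>M. val_pq p q w = of_nat M \<and> q * N = p * M + d"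
proof -
  define L where "L = length w"
  obtain m where m: "val_pq p q w * of_nat q ^ L = of_nat m"
    using val_pq_mult_q_power_nat[OF assms(2)] unfolding L_def by blast
  have "of_nat q * of_nat N = of_nat p * val_pq p q w + (of_nat d :: rat)"
    using assms(2,3) by (simp add: val_pq_snoc field_simps)
  then have "(of_nat (q ^ L * (q * N)) :: rat) = of_nat q ^ L * (of_nat p * val_pq p q w + of_nat d)"
    by simp
  also have "\<dots> = of_nat p * (val_pq p q w * of_nat q ^ L) + of_nat d * of_nat q ^ L"
    by (simp add: algebra_simps)
  also have "\<dots> = of_nat (p * m + d * q ^ L)"
    using m by simp
  finally have E: "q ^ L * (q * N) = p * m + d * q ^ L"
    by (simp only: of_nat_eq_iff)
  then have "q ^ L dvd p * m"
    by (metis dvd_add_left_iff dvd_triv_left dvd_triv_right)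
  moreover have "coprime (q ^ L) p"
    using assms(1) by (simp add: coprime_commute)
  ultimately obtain M where M: "m = q ^ L * M"
    using coprime_dvd_mult_right_iff by blast
  have "val_pq p q w = of_nat M"
    using m M assms(2) by (simp add: field_simps)
  moreover have "q * N = p * M + d"
  proof -
    have "q ^ L * (q * N) = q ^ L * (p * M + d)"
      using E M by (simp add: algebra_simps)
    then show ?thesis
      using assms(2) by simp
  qed
  ultimately show ?thesis by blast
qed

definition is_rep_pq :: "nat \<Rightarrow> nat \<Rightarrow> nat \<Rightarrow> nat list \<Rightarrow> bool" where
  "is_rep_pq p q n w \<longleftrightarrow> set w \<subseteq> alph p \<and> (w = [] \<or> hd w \<noteq> 0) \<and> val_pq p q w = of_nat n"

lemma rep_pq_eq_The: "rep_pq p q n = (THE w. is_rep_pq p q n w)"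
  by (simp add: rep_pq_def is_rep_pq_def)

text \<open>The last digit of the representation of \<open>N > 0\<close> is \<open>q N mod p\<close>, and the remaining
  digits represent \<open>q N div p < N\<close>.\<close>
lemma is_rep_pq_exists:
  assumes "q < p" "0 < q"
  shows "\<exists>w. is_rep_pq p q N w"
proof (induction N rule: less_induct)
  case (less N)
  show ?case
  proof (cases "N = 0")
    case True
    then have "is_rep_pq p q N []"
      by (simp add: is_rep_pq_def)
    then show ?thesis ..
  next
    case False
    define d where "d = q * N mod p"
    define M where "M = q * N div p"
    have "M < N"
      using assms False unfolding M_def by (simp add: less_mult_imp_div_less)
    then obtain u where u: "is_rep_pq p q M u"
      using less.IH by blast
    have qN: "q * N = p * M + d"
      by (simp add: d_def M_def)
    have "val_pq p q (u @ [d]) = of_nat (q * N) / of_nat q"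
      using u unfolding qN by (simp add: val_pq_snoc is_rep_pq_def add_divide_distrib)
    then have "val_pq p q (u @ [d]) = of_nat N"
      using assms by simp
    moreover have "hd (u @ [d]) \<noteq> 0"
    proof (cases "u = []")
      case True
      then have "d = q * N"
        using u qN by (simp add: is_rep_pq_def)
      then show ?thesis
        using True False assms by simp
    qed (use u in \<open>simp add: is_rep_pq_def\<close>)
    moreover have "d < p"
      using assms unfolding d_def by simp
    ultimately have "is_rep_pq p q N (u @ [d])"
      using u by (auto simp: is_rep_pq_def alph_def)
    then show ?thesis ..
  qed
qed

lemma is_rep_pq_unique:
  assumes "coprime p q" "0 < p" "0 < q"
  shows "is_rep_pq p q N u \<Longrightarrow> is_rep_pq p q N v \<Longrightarrow> u = v"
proof (induction u arbitrary: v N rule: rev_induct)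
  case Nil
  then have "val_pq p q v = 0"
    by (simp add: is_rep_pq_def)
  then show ?case
    using Nil.prems val_pq_pos[OF assms(2,3), of v] by (auto simp: is_rep_pq_def)
next
  case (snoc d u)
  have "N \<noteq> 0"
    using snoc.prems(1) val_pq_pos[OF assms(2,3), of "u @ [d]"] by (auto simp: is_rep_pq_def)
  then obtain v' e where v: "v = v' @ [e]"
    using snoc.prems(2) by (cases v rule: rev_cases) (auto simp: is_rep_pq_def)
  obtain M where M: "val_pq p q u = of_nat M" "q * N = p * M + d"
    using val_pq_snoc_eq_nat[OF assms(1,3)] snoc.prems(1) unfolding is_rep_pq_def by blast
  obtain M' where M': "val_pq p q v' = of_nat M'" "q * N = p * M' + e"
    using val_pq_snoc_eq_nat[OF assms(1,3)] snoc.prems(2) unfolding v is_rep_pq_def by blast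
  have "d < p" "e < p"
    using snoc.prems v by (auto simp: is_rep_pq_def alph_def)
  have "p * M + d = p * M' + e"
    using M(2) M'(2) by simp
  moreover have "(p * M + d) div p = M" "(p * M + d) mod p = d"
    using \<open>d < p\<close> by simp_all
  moreover have "(p * M' + e) div p = M'" "(p * M' + e) mod p = e"
    using \<open>e < p\<close> by simp_all
  ultimately have "d = e" "M = M'"
    by simp_all
  have "is_rep_pq p q M u"
    using snoc.prems(1) M(1) by (cases u) (auto simp: is_rep_pq_def)
  moreover have "is_rep_pq p q M v'"
    using snoc.prems(2) M'(1) \<open>M = M'\<close> v by (cases v') (auto simp: is_rep_pq_def)
  ultimately show ?case
    using snoc.IH v \<open>d = e\<close> by blast
qed

locale rational_base =
  fixes p q :: nat
  assumes q_less_p: "q < p" and q_pos: "0 < q" and coprime_p_q: "coprime p q"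
begin

lemma p_pos: "0 < p"
  using q_less_p by simp

lemma is_rep_pq_rep_pq: "is_rep_pq p q n (rep_pq p q n)"
  unfolding rep_pq_eq_The
proof (rule theI')
  show "\<exists>!w. is_rep_pq p q n w"
    using is_rep_pq_exists[OF q_less_p q_pos] is_rep_pq_unique[OF coprime_p_q p_pos q_pos] by blast
qed

lemma rep_pq_eqI: "is_rep_pq p q n w \<Longrightarrow> rep_pq p q n = w"
  using is_rep_pq_rep_pq is_rep_pq_unique[OF coprime_p_q p_pos q_pos] by blast

lemma rep_pq_in_lists: "rep_pq p q n \<in> lists (alph p)"
  using is_rep_pq_rep_pq by (auto simp: is_rep_pq_def)

lemma val_rep_pq [simp]: "val_pq p q (rep_pq p q n) = of_nat n"
  using is_rep_pq_rep_pq by (simp add: is_rep_pq_def)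

lemma val_pq_eq_of_nat_iff:
  assumes "w \<in> lists (alph p)"
  shows "val_pq p q w = of_nat n \<longleftrightarrow> (\<exists>k. w = replicate k 0 @ rep_pq p q n)"
proof
  show "\<exists>k. w = replicate k 0 @ rep_pq p q n" if "val_pq p q w = of_nat n"
    using assms that
  proof (induction w)
    case Nil
    then have "rep_pq p q n = []"
      by (intro rep_pq_eqI) (simp add: is_rep_pq_def)
    then show ?case
      by simp
  next
    case (Cons d w)
    show ?case
    proof (cases "d = 0")
      case True
      then obtain k where "w = replicate k 0 @ rep_pq p q n"
        using Cons by (auto simp: val_pq_Cons)
      then show ?thesis
        using True by (auto intro: exI[of _ "Suc k"])
    next
      case False
      then have "rep_pq p q n = d # w"
        using Cons by (intro rep_pq_eqI) (auto simp: is_rep_pq_def)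
      then show ?thesis
        by (auto intro: exI[of _ 0])
    qed
  qed
qed auto

lemma val_pq_image_iff:
  "of_nat n \<in> val_pq p q ` {w \<in> lists (alph p). P w} \<longleftrightarrow> (\<exists>k. P (replicate k 0 @ rep_pq p q n))"
proof -
  have padded: "replicate k 0 @ rep_pq p q n \<in> lists (alph p)" for k
    using rep_pq_in_lists p_pos by (auto simp: alph_def)
  have "of_nat n \<in> val_pq p q ` {w \<in> lists (alph p). P w}
      \<longleftrightarrow> (\<exists>w \<in> lists (alph p). val_pq p q w = of_nat n \<and> P w)"
    by (auto simp: image_iff)
  also have "\<dots> \<longleftrightarrow> (\<exists>k. P (replicate k 0 @ rep_pq p q n))"
  proof
    assume "\<exists>w \<in> lists (alph p). val_pq p q w = of_nat n \<and> P w"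
    then obtain w where "w \<in> lists (alph p)" "val_pq p q w = of_nat n" "P w"
      by blast
    then show "\<exists>k. P (replicate k 0 @ rep_pq p q n)"
      using val_pq_eq_of_nat_iff by auto
  next
    assume "\<exists>k. P (replicate k 0 @ rep_pq p q n)"
    then obtain k where "P (replicate k 0 @ rep_pq p q n)" ..
    then show "\<exists>w \<in> lists (alph p). val_pq p q w = of_nat n \<and> P w"
      using padded[of k] by (intro bexI[of _ "replicate k 0 @ rep_pq p q n"]) simp_all
  qed
  finally show ?thesis .
qed

end

lemma of_nat_image_eq_Int_Nats_iff:
  "of_nat ` {n. P n} = R \<inter> (\<nat> :: 'a :: semiring_char_0 set) \<longleftrightarrow> (\<forall>n. of_nat n \<in> R \<longleftrightarrow> P n)"
proof
  assume eq: "of_nat ` {n. P n} = R \<inter> \<nat>"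
  have "of_nat n \<in> R \<longleftrightarrow> (of_nat n :: 'a) \<in> of_nat ` {n. P n}" for n
    unfolding eq by simp
  then show "\<forall>n. of_nat n \<in> R \<longleftrightarrow> P n"
    by (simp add: image_iff)
qed (auto elim: Nats_cases)

lemma foldl_in_closed:
  assumes "\<forall>s\<in>Q. \<forall>d\<in>D. \<delta> s d \<in> Q" "s \<in> Q" "w \<in> lists D"
  shows "foldl \<delta> s w \<in> Q"
  using assms(3,2) by (induction w arbitrary: s) (use assms(1) in auto)

lemma foldl_image: "foldl (\<lambda>S d. (\<lambda>s. \<delta> s d) ` S) S w = (\<lambda>s. foldl \<delta> s w) ` S"
  by (induction w arbitrary: S) (simp_all add: image_image)

lemma dfa_rename_states_nat:
  fixes Q :: "'s set" and \<delta> :: "'s \<Rightarrow> 'd \<Rightarrow> 's"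
  assumes "finite Q" and closed: "\<forall>s\<in>Q. \<forall>d\<in>D. \<delta> s d \<in> Q"
  obtains f :: "'s \<Rightarrow> nat" and \<delta>' :: "nat \<Rightarrow> 'd \<Rightarrow> nat"
  where "inj_on f Q" and "\<forall>s\<in>f ` Q. \<forall>d\<in>D. \<delta>' s d \<in> f ` Q"
    and "\<And>s w. s \<in> Q \<Longrightarrow> w \<in> lists D \<Longrightarrow> foldl \<delta>' (f s) w = f (foldl \<delta> s w)"
proof -
  obtain f :: "'s \<Rightarrow> nat" where inj: "inj_on f Q"
    using finite_imp_inj_to_nat_seg[OF assms(1)] by blast
  define \<delta>' where "\<delta>' m d = f (\<delta> (inv_into Q f m) d)" for m d
  have step: "\<delta>' (f s) d = f (\<delta> s d)" if "s \<in> Q" for s d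
    using inj that by (simp add: \<delta>'_def)
  have "foldl \<delta>' (f s) w = f (foldl \<delta> s w)" if "s \<in> Q" "w \<in> lists D" for s w
    using that(2,1) by (induction w arbitrary: s) (simp_all add: step closed)
  moreover have "\<forall>s\<in>f ` Q. \<forall>d\<in>D. \<delta>' s d \<in> f ` Q"
    using step closed by auto
  ultimately show thesis
    using that inj by blast
qed

lemma pq_recognizableI:
  fixes Q :: "'s set"
  assumes "finite Q" "init \<in> Q" and closed: "\<forall>s\<in>Q. \<forall>d\<in>alph p. \<delta> s d \<in> Q"
  shows "pq_recognizable p q (val_pq p q ` {w \<in> lists (alph p). foldl \<delta> init w \<in> F})"
proof -
  obtain f :: "'s \<Rightarrow> nat" and \<delta>' where inj: "inj_on f Q"
    and closed': "\<forall>s\<in>f ` Q. \<forall>d\<in>alph p. \<delta>' s d \<in> f ` Q"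
    and run: "\<And>s w. s \<in> Q \<Longrightarrow> w \<in> lists (alph p) \<Longrightarrow> foldl \<delta>' (f s) w = f (foldl \<delta> s w)"
    using dfa_rename_states_nat[OF assms(1) closed] by blast
  have "foldl \<delta>' (f init) w \<in> f ` (F \<inter> Q) \<longleftrightarrow> foldl \<delta> init w \<in> F" if "w \<in> lists (alph p)" for w
    using run[OF assms(2) that] foldl_in_closed[OF closed assms(2) that] inj
    by (auto simp: inj_on_image_mem_iff)
  then have "dfa_lang p (f init) \<delta>' (f ` (F \<inter> Q)) = {w \<in> lists (alph p). foldl \<delta> init w \<in> F}"
    by (auto simp: dfa_lang_def)
  then show ?thesis
    unfolding pq_recognizable_def N_pq_def
    using assms(1,2) closed'
    by (intro conjI exI[of _ "f ` Q"] exI[of _ "f init"] exI[of _ \<delta>'] exI[of _ "f ` (F \<inter> Q)"]) auto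
qed

context rational_base
begin

lemma pq_automaticI:
  fixes Q :: "'s set" and \<tau> :: "'s \<Rightarrow> 'a"
  assumes "finite Q" "init \<in> Q" and closed: "\<forall>s\<in>Q. \<forall>d\<in>alph p. \<delta> s d \<in> Q"
    and "\<forall>s\<in>Q. \<tau> s \<in> A" and "\<forall>n. x n = \<tau> (foldl \<delta> init (rep_pq p q n))"
  shows "pq_automatic p q A x"
proof -
  obtain f :: "'s \<Rightarrow> nat" and \<delta>' where inj: "inj_on f Q"
    and closed': "\<forall>s\<in>f ` Q. \<forall>d\<in>alph p. \<delta>' s d \<in> f ` Q"
    and run: "\<And>s w. s \<in> Q \<Longrightarrow> w \<in> lists (alph p) \<Longrightarrow> foldl \<delta>' (f s) w = f (foldl \<delta> s w)"
    using dfa_rename_states_nat[OF assms(1) closed] by blast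
  have "x n = (\<tau> \<circ> inv_into Q f) (foldl \<delta>' (f init) (rep_pq p q n))" for n
    using run[OF assms(2) rep_pq_in_lists] foldl_in_closed[OF closed assms(2) rep_pq_in_lists]
      inj assms(5) by simp
  moreover have "\<forall>s\<in>f ` Q. (\<tau> \<circ> inv_into Q f) s \<in> A"
    using inj assms(4) by auto
  ultimately show ?thesis
    unfolding pq_automatic_def
    using assms(1,2) closed' by (intro exI[of _ "f ` Q"] exI[of _ "f init"] exI[of _ \<delta>']) auto
qed

lemma pq_automatic_fibre:
  assumes "pq_automatic p q A x"
  shows "pq_automatic p q UNIV (\<lambda>n. x n = a)"
proof -
  obtain Q init \<delta> \<tau> where "finite (Q :: nat set)" "init \<in> Q" "\<forall>s\<in>Q. \<forall>d\<in>alph p. \<delta> s d \<in> Q"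
    and "\<forall>n. x n = \<tau> (foldl \<delta> init (rep_pq p q n))"
    using assms unfolding pq_automatic_def by blast
  then show ?thesis
    by (intro pq_automaticI[where Q = Q and init = init and \<delta> = \<delta> and \<tau> = "\<lambda>s. \<tau> s = a"]) simp_all
qed

lemma pq_automatic_of_fibres:
  assumes "finite A" and x_in_A: "\<forall>n. x n \<in> A"
    and fibres: "\<forall>a\<in>A. pq_automatic p q UNIV (\<lambda>n. x n = a)"
  shows "pq_automatic p q A x"
proof -
  obtain Q :: "'a \<Rightarrow> nat set" and init \<delta> and \<tau> :: "'a \<Rightarrow> nat \<Rightarrow> bool"
    where Q: "\<forall>a\<in>A. finite (Q a) \<and> init a \<in> Q a \<and> (\<forall>s\<in>Q a. \<forall>d\<in>alph p. \<delta> a s d \<in> Q a)"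
    and \<tau>: "\<forall>a\<in>A. \<forall>n. (x n = a) = \<tau> a (foldl (\<delta> a) (init a) (rep_pq p q n))"
    using fibres unfolding pq_automatic_def by metis
  define \<Delta> where "\<Delta> S d = (\<lambda>a\<in>A. \<delta> a (S a) d)" for S :: "'a \<Rightarrow> nat" and d
  text \<open>After reading \<open>rep_pq p q n\<close> exactly the component \<open>x n\<close> accepts; the fallback
    \<open>x 0\<close> only makes \<open>out\<close> total into \<open>A\<close>.\<close>
  define out where "out S = (if \<exists>a\<in>A. \<tau> a (S a) then (SOME a. a \<in> A \<and> \<tau> a (S a)) else x 0)"
    for S :: "'a \<Rightarrow> nat"
  have run: "foldl \<Delta> (restrict init A) w = (\<lambda>a\<in>A. foldl (\<delta> a) (init a) w)" for w
    by (induction w rule: rev_induct) (simp_all add: \<Delta>_def restrict_def cong: if_cong)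
  have out_eq: "out S = x n" if "\<forall>a\<in>A. \<tau> a (S a) \<longleftrightarrow> a = x n" for S n
  proof -
    have "(SOME a. a \<in> A \<and> \<tau> a (S a)) = x n"
      using that x_in_A by (intro some_equality) auto
    then show ?thesis
      using that x_in_A unfolding out_def by auto
  qed
  have "x n = out (foldl \<Delta> (restrict init A) (rep_pq p q n))" for n
    by (rule out_eq[symmetric]) (auto simp: run \<tau>[rule_format, symmetric])
  moreover have "out S \<in> A" for S
    unfolding out_def using x_in_A by (auto intro: someI2_ex)
  moreover have "\<forall>S\<in>Pi\<^sub>E A Q. \<forall>d\<in>alph p. \<Delta> S d \<in> Pi\<^sub>E A Q"
    using Q by (auto simp: \<Delta>_def)
  moreover have "finite (Pi\<^sub>E A Q)" "restrict init A \<in> Pi\<^sub>E A Q"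
    using Q \<open>finite A\<close> by (auto intro: finite_PiE)
  ultimately show ?thesis
    by (intro pq_automaticI[where Q = "Pi\<^sub>E A Q" and init = "restrict init A" and \<delta> = \<Delta>
          and \<tau> = out]) simp_all
qed

text \<open>The state records the set of states reached on all zero-paddings of the input read so far.\<close>
lemma pq_recognizable_imp_automatic:
  assumes "pq_recognizable p q R"
  shows "pq_automatic p q UNIV (\<lambda>n. of_nat n \<in> R)"
proof -
  obtain Q :: "nat set" and init \<delta> F where "finite Q" "init \<in> Q"
    and closed: "\<forall>s\<in>Q. \<forall>d\<in>alph p. \<delta> s d \<in> Q" and R: "R = val_pq p q ` dfa_lang p init \<delta> F"
    using assms unfolding pq_recognizable_def by blast
  define Z where "Z = range (\<lambda>k. foldl \<delta> init (replicate k 0))"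
  define \<Delta> where "\<Delta> S d = (\<lambda>s. \<delta> s d) ` S" for S d
  have "replicate k 0 \<in> lists (alph p)" for k
    using p_pos by (auto simp: alph_def in_lists_conv_set)
  then have "Z \<in> Pow Q"
    unfolding Z_def using foldl_in_closed[OF closed \<open>init \<in> Q\<close>] by blast
  moreover have "\<forall>S\<in>Pow Q. \<forall>d\<in>alph p. \<Delta> S d \<in> Pow Q"
    using closed by (auto simp: \<Delta>_def)
  moreover have "of_nat n \<in> R \<longleftrightarrow> foldl \<Delta> Z (rep_pq p q n) \<inter> F \<noteq> {}" for n
  proof -
    have "foldl \<Delta> Z (rep_pq p q n) = range (\<lambda>k. foldl \<delta> init (replicate k 0 @ rep_pq p q n))"
      unfolding \<Delta>_def foldl_image Z_def by (simp add: image_image)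
    then show ?thesis
      unfolding R dfa_lang_def val_pq_image_iff by auto
  qed
  ultimately show ?thesis
    using \<open>finite Q\<close>
    by (intro pq_automaticI[where Q = "Pow Q" and init = Z and \<delta> = \<Delta>
          and \<tau> = "\<lambda>S. S \<inter> F \<noteq> {}"]) auto
qed

text \<open>The extra initial state \<open>None\<close> is kept while reading leading zeros, so all zero-paddings
  of a representation end in the same state.\<close>
lemma pq_automatic_imp_recognizable:
  assumes "pq_automatic p q UNIV P"
  shows "\<exists>R. pq_recognizable p q R \<and> of_nat ` {n. P n} = R \<inter> \<nat>"
proof -
  obtain Q :: "nat set" and init \<delta> \<tau> where "finite Q" "init \<in> Q"
    and closed: "\<forall>s\<in>Q. \<forall>d\<in>alph p. \<delta> s d \<in> Q" and P: "\<forall>n. P n = \<tau> (foldl \<delta> init (rep_pq p q n))"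
    using assms unfolding pq_automatic_def by blast
  define state where "state st = (case st of None \<Rightarrow> init | Some s \<Rightarrow> s)" for st
  define \<delta>' where "\<delta>' st d = (if st = None \<and> d = 0 then None else Some (\<delta> (state st) d))" for st d
  define L where "L = {w \<in> lists (alph p). foldl \<delta>' None w \<in> {st. \<tau> (state st)}}"
  have "\<forall>st\<in>insert None (Some ` Q). \<forall>d\<in>alph p. \<delta>' st d \<in> insert None (Some ` Q)"
    using closed \<open>init \<in> Q\<close> by (auto simp: \<delta>'_def state_def)
  then have "pq_recognizable p q (val_pq p q ` L)"
    unfolding L_def using \<open>finite Q\<close>
    by (intro pq_recognizableI[where Q = "insert None (Some ` Q)" and init = None]) auto
  have zeros: "foldl \<delta>' None (replicate k 0) = None" for k
    by (induction k) (simp_all add: \<delta>'_def)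
  have started: "foldl \<delta>' (Some s) w = Some (foldl \<delta> s w)" for s w
    by (induction w arbitrary: s) (simp_all add: \<delta>'_def state_def)
  have "state (foldl \<delta>' None (replicate k 0 @ rep_pq p q n)) = foldl \<delta> init (rep_pq p q n)" for k n
  proof (cases "rep_pq p q n")
    case (Cons d u)
    then have "d \<noteq> 0"
      using is_rep_pq_rep_pq[of n] by (simp add: is_rep_pq_def)
    then have "\<delta>' None d = Some (\<delta> init d)"
      by (simp add: \<delta>'_def state_def)
    then show ?thesis
      using Cons by (simp add: zeros started state_def)
  qed (simp add: zeros state_def)
  then have "of_nat n \<in> val_pq p q ` L \<longleftrightarrow> P n" for n
    unfolding L_def val_pq_image_iff using P by simp
  then have "of_nat ` {n. P n} = val_pq p q ` L \<inter> \<nat>"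
    by (simp add: of_nat_image_eq_Int_Nats_iff)
  with \<open>pq_recognizable p q (val_pq p q ` L)\<close> show ?thesis
    by blast
qed

end

theorem mainTheorem13:
  fixes p q :: nat and A :: "'a set" and x :: "nat \<Rightarrow> 'a"
  assumes "p > q" and "q > 1" and "coprime p q"
    and "finite A" and "\<forall>n. x n \<in> A"
  shows "pq_automatic p q A x \<longleftrightarrow>
    (\<forall>a\<in>A. \<exists>R. pq_recognizable p q R \<and> of_nat ` {i. x i = a} = R \<inter> (\<nat> :: rat set))"
proof -
  interpret rational_base p q
    using assms(1-3) by unfold_locales simp_all
  show ?thesis
  proof
    assume "pq_automatic p q A x"
    then have "\<exists>R. pq_recognizable p q R \<and> of_nat ` {i. x i = a} = R \<inter> \<nat>" for a
      by (rule pq_automatic_imp_recognizable[OF pq_automatic_fibre])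
    then show "\<forall>a\<in>A. \<exists>R. pq_recognizable p q R \<and> of_nat ` {i. x i = a} = R \<inter> \<nat>"
      by blast
  next
    assume fibres: "\<forall>a\<in>A. \<exists>R. pq_recognizable p q R \<and> of_nat ` {i. x i = a} = R \<inter> \<nat>"
    have "pq_automatic p q UNIV (\<lambda>n. x n = a)" if "a \<in> A" for a
    proof -
      obtain R where "pq_recognizable p q R \<and> of_nat ` {i. x i = a} = R \<inter> (\<nat> :: rat set)"
        using bspec[OF fibres \<open>a \<in> A\<close>] ..
      then have "pq_recognizable p q R" and "(\<lambda>n. of_nat n \<in> R) = (\<lambda>n. x n = a)"
        by (simp_all add: of_nat_image_eq_Int_Nats_iff)
      then show ?thesis
        using pq_recognizable_imp_automatic[OF \<open>pq_recognizable p q R\<close>] by simp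
    qed
    then show "pq_automatic p q A x"
      using pq_automatic_of_fibres[OF assms(4,5)] by simp
  qed
qed

end
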